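(* If $\mathscr{S}_1,\mathscr{S}_2\subset\mathbb{T}^n$ are projected tropical Metzler spectrahedra, then $\mathrm{tconv}(\mathscr{S}_1\cup\mathscr{S}_2)$ is a projected tropical Metzler spectrahedron.
   Context: $\mathbb{T}=\mathbb{R}\cup\{-\infty\}$. Tropically convex: $\max(\lambda+x,\mu+y)\in X$ for $x,y\in X$, $\lambda,\mu\in\mathbb{T}$ with $\max(\lambda,\mu)=0$; $\mathrm{tconv}(Z)$ is the smallest tropically convex set containing $Z$. Signed tropical numbers $\mathbb{S}=(\{\pm1\}\times\mathbb{R})\cup\{(0,-\infty)\}$, $(1,a)$ positive, $(-1,a)$ negative, modulus $|(s,a)|=a$; a matrix over $\mathbb{S}$ is tropical Metzler if off-diagonal entries are negative or $(0,-\infty)$. For symmetric tropical Metzler $Q^{(0)},\dots,Q^{(N)}$, with $x_0:=0$ and $x\in\mathbb{T}^N$: $Q^{+}_{ii}(x)=\max\{|Q^{(k)}_{ii}|+x_k: Q^{(k)}_{ii}\text{ positive}\}$, $Q^-_{ii}$ likewise with negative entries ($\max\emptyset=-\infty$), $Q_{ij}(x)=\max_k(|Q^{(k)}_{ij}|+x_k)$ ($i\ne j$); the tropical Metzler spectrahedron $\mathcal{S}(Q^{(0)}|Q^{(1)},\dots,Q^{(N)})=\{x\in\mathbb{T}^N: Q^+_{ii}(x)\ge Q^-_{ii}(x)\ \forall i,\ Q^+_{ii}(x)+Q^+_{jj}(x)\ge2Q_{ij}(x)\ \forall i\ne j\}$. A subset of $\mathbb{T}^d$ is a projected tropical Metzler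 spectrahedron if it is the image of a tropical Metzler spectrahedron in $\mathbb{T}^{d+d'}$ ($d'\ge0$) under projection onto the first $d$ coordinates. *)

theory Defs
  imports "HOL-Library.Extended_Real"
begin

text \<open>Tropical numbers T = R \<union> {-\<infinity>} are the extended reals other than +\<infinity>.
  Points of T^n are lists of length n.\<close>

definition Tn :: "nat \<Rightarrow> ereal list set" where
  "Tn n = {x. length x = n \<and> (\<forall>a\<in>set x. a \<noteq> \<infinity>)}"

definition trop_convex :: "ereal list set \<Rightarrow> bool" where
  "trop_convex X \<longleftrightarrow>
     (\<forall>x\<in>X. \<forall>y\<in>X. \<forall>l m. l \<noteq> \<infinity> \<and> m \<noteq> \<infinity> \<and> max l m = 0 \<longrightarrow>
        map2 (\<lambda>a b. max (l + a) (m + b)) x y \<in> X)"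

definition tconv :: "nat \<Rightarrow> ereal list set \<Rightarrow> ereal list set" where
  "tconv n Z = \<Inter>{X. X \<subseteq> Tn n \<and> Z \<subseteq> X \<and> trop_convex X}"

datatype stn = SPos real | SNeg real | SZero

fun smod :: "stn \<Rightarrow> ereal" where
  "smod (SPos a) = ereal a"
| "smod (SNeg a) = ereal a"
| "smod SZero = -\<infinity>"

fun is_pos :: "stn \<Rightarrow> bool" where
  "is_pos (SPos a) = True" | "is_pos _ = False"

fun is_neg :: "stn \<Rightarrow> bool" where
  "is_neg (SNeg a) = True" | "is_neg _ = False"

text \<open>A family Q^(0),...,Q^(N) of m x m matrices: Q k i j, k \<le> N, i,j < m.
  Symmetric tropical Metzler: symmetric, off-diagonal entries negative or zero.\<close>
definition sym_metzler_family :: "nat \<Rightarrow> nat \<Rightarrow> (nat \<Rightarrow> nat \<Rightarrow> nat \<Rightarrow> stn) \<Rightarrow> bool" where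
  "sym_metzler_family m N Q \<longleftrightarrow>
     (\<forall>k\<le>N. \<forall>i<m. \<forall>j<m. Q k i j = Q k j i \<and>
        (i \<noteq> j \<longrightarrow> is_neg (Q k i j) \<or> Q k i j = SZero))"

text \<open>Coordinate x_k with the convention x_0 = 0 (x is a list x_1..x_N).\<close>
definition xcoord :: "ereal list \<Rightarrow> nat \<Rightarrow> ereal" where
  "xcoord x k = (if k = 0 then 0 else x ! (k - 1))"

definition Qplus :: "nat \<Rightarrow> (nat \<Rightarrow> nat \<Rightarrow> nat \<Rightarrow> stn) \<Rightarrow> ereal list \<Rightarrow> nat \<Rightarrow> ereal" where
  "Qplus N Q x i = (SUP k\<in>{k. k \<le> N \<and> is_pos (Q k i i)}. smod (Q k i i) + xcoord x k)"

definition Qminus :: "nat \<Rightarrow> (nat \<Rightarrow> nat \<Rightarrow> nat \<Rightarrow> stn) \<Rightarrow> ereal list \<Rightarrow> nat \<Rightarrow> ereal" where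
  "Qminus N Q x i = (SUP k\<in>{k. k \<le> N \<and> is_neg (Q k i i)}. smod (Q k i i) + xcoord x k)"

definition Qoff :: "nat \<Rightarrow> (nat \<Rightarrow> nat \<Rightarrow> nat \<Rightarrow> stn) \<Rightarrow> ereal list \<Rightarrow> nat \<Rightarrow> nat \<Rightarrow> ereal" where
  "Qoff N Q x i j = (SUP k\<in>{..N}. smod (Q k i j) + xcoord x k)"

definition metzler_spec :: "nat \<Rightarrow> nat \<Rightarrow> (nat \<Rightarrow> nat \<Rightarrow> nat \<Rightarrow> stn) \<Rightarrow> ereal list set" where
  "metzler_spec m N Q = {x \<in> Tn N.
      (\<forall>i<m. Qplus N Q x i \<ge> Qminus N Q x i) \<and>
      (\<forall>i<m. \<forall>j<m. i \<noteq> j \<longrightarrow> Qplus N Q x i + Qplus N Q x j \<ge> 2 * Qoff N Q x i j)}"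

definition proj_metzler_spec :: "nat \<Rightarrow> ereal list set \<Rightarrow> bool" where
  "proj_metzler_spec d S \<longleftrightarrow>
     (\<exists>d' m Q. m \<ge> 1 \<and> sym_metzler_family m (d + d') Q \<and>
        S = take d ` metzler_spec m (d + d') Q)"

end

(* Each projected spectrahedron S is lifted to a tropical cone: a block of variables holding
   \<lambda> + (0, p) with \<lambda> \<le> 0 and p a point of the spectrahedron over S, together with two auxiliary
   variables forcing the whole block to be -\<infinity> when \<lambda> = -\<infinity>. Two such blocks, the condition
   max(\<lambda>, \<mu>) \<ge> 0 and the identities z_i = max(\<lambda> + p_i, \<mu> + q_i) are all tropical Metzler
   inequalities in one or two variables, and block-diagonal sums of Metzler families express
   conjunctions. The projection of the resulting spectrahedron onto z is therefore the set of
   tropical convex combinations of a point of S1 and a point of S2; it contains S1 \<union> S2, and it is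
   tropically convex because every tropical Metzler spectrahedron is. Hence it is tconv(S1 \<union> S2). *)

theory Submission
  imports Defs
begin

type_synonym qfam = "nat \<Rightarrow> nat \<Rightarrow> nat \<Rightarrow> stn"

definition trop_lin :: "nat set \<Rightarrow> (nat \<Rightarrow> stn) \<Rightarrow> (nat \<Rightarrow> ereal) \<Rightarrow> ereal" where
  "trop_lin A q v = (SUP k\<in>A. smod (q k) + v k)"

definition diag_pos :: "nat \<Rightarrow> qfam \<Rightarrow> (nat \<Rightarrow> ereal) \<Rightarrow> nat \<Rightarrow> ereal" where
  "diag_pos N Q v i = trop_lin {k. k \<le> N \<and> is_pos (Q k i i)} (\<lambda>k. Q k i i) v"

definition diag_neg :: "nat \<Rightarrow> qfam \<Rightarrow> (nat \<Rightarrow> ereal) \<Rightarrow> nat \<Rightarrow> ereal" where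
  "diag_neg N Q v i = trop_lin {k. k \<le> N \<and> is_neg (Q k i i)} (\<lambda>k. Q k i i) v"

definition off_diag :: "nat \<Rightarrow> qfam \<Rightarrow> (nat \<Rightarrow> ereal) \<Rightarrow> nat \<Rightarrow> nat \<Rightarrow> ereal" where
  "off_diag N Q v i j = trop_lin {..N} (\<lambda>k. Q k i j) v"

text \<open>The inequalities of a tropical Metzler spectrahedron for a coefficient vector
  \<open>v\<close> indexed from 0; \<open>v 0\<close> is not normalised to 0, so this is the homogenised version.\<close>
definition metzler_sat :: "nat \<Rightarrow> nat \<Rightarrow> qfam \<Rightarrow> (nat \<Rightarrow> ereal) \<Rightarrow> bool" where
  "metzler_sat m N Q v \<longleftrightarrow> (\<forall>i<m. diag_neg N Q v i \<le> diag_pos N Q v i) \<and>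
     (\<forall>i<m. \<forall>j<m. i \<noteq> j \<longrightarrow> 2 * off_diag N Q v i j \<le> diag_pos N Q v i + diag_pos N Q v j)"

lemma metzler_spec_eq: "metzler_spec m N Q = {x \<in> Tn N. metzler_sat m N Q (xcoord x)}"
  unfolding metzler_spec_def metzler_sat_def diag_pos_def diag_neg_def off_diag_def trop_lin_def
    Qplus_def Qminus_def Qoff_def
  by simp

subsection \<open>Tropical linear forms\<close>

lemma ereal_add_max_distrib_left: "(c::ereal) + max a b = max (c + a) (c + b)"
  by (simp add: max_def add_left_mono antisym)

lemma trop_lin_max:
  "trop_lin A q (\<lambda>k. max (v k) (w k)) = max (trop_lin A q v) (trop_lin A q w)"
  unfolding trop_lin_def
proof (rule antisym)
  show "(SUP k\<in>A. smod (q k) + max (v k) (w k)) \<le> max (SUP k\<in>A. smod (q k) + v k) (SUP k\<in>A. smod (q k) + w k)"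
    by (rule SUP_least)
      (auto simp: ereal_add_max_distrib_left intro: max.coboundedI1 max.coboundedI2 SUP_upper)
  show "max (SUP k\<in>A. smod (q k) + v k) (SUP k\<in>A. smod (q k) + w k) \<le> (SUP k\<in>A. smod (q k) + max (v k) (w k))"
    by (intro max.boundedI SUP_mono) (meson add_left_mono max.cobounded1 max.cobounded2)+
qed

lemma trop_lin_translate: "trop_lin A q (\<lambda>k. ereal t + v k) = ereal t + trop_lin A q v"
proof (cases "A = {}")
  case True
  then show ?thesis by (simp add: trop_lin_def bot_ereal_def)
next
  case False
  have "trop_lin A q (\<lambda>k. ereal t + v k) = (SUP k\<in>A. ereal t + (smod (q k) + v k))"
    unfolding trop_lin_def by (simp add: ac_simps)
  also have "\<dots> = ereal t + trop_lin A q v"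
    unfolding trop_lin_def using False by (intro SUP_ereal_add_right) auto
  finally show ?thesis .
qed

lemma trop_lin_cong:
  "(\<And>k. k \<in> A \<Longrightarrow> q k = q' k) \<Longrightarrow> (\<And>k. k \<in> A \<Longrightarrow> v k = w k) \<Longrightarrow>
    trop_lin A q v = trop_lin A q' w"
  unfolding trop_lin_def by (rule SUP_cong) simp_all

lemma trop_lin_empty [simp]: "trop_lin {} q v = -\<infinity>"
  by (simp add: trop_lin_def bot_ereal_def)

lemma trop_lin_singleton [simp]: "trop_lin {k} q v = smod (q k) + v k"
  by (simp add: trop_lin_def)

text \<open>Zero coefficients contribute \<open>-\<infinity>\<close> only at coordinates other than \<open>\<infinity>\<close>, since
  \<open>-\<infinity> + \<infinity> = \<infinity>\<close> in \<open>ereal\<close>.\<close>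
lemma trop_lin_drop_zeros:
  assumes "B \<subseteq> A" and "\<And>k. k \<in> A - B \<Longrightarrow> q k = SZero \<and> v k \<noteq> \<infinity>"
  shows "trop_lin A q v = trop_lin B q v"
  unfolding trop_lin_def
proof (rule antisym)
  show "(SUP k\<in>A. smod (q k) + v k) \<le> (SUP k\<in>B. smod (q k) + v k)"
  proof (rule SUP_least)
    fix k assume "k \<in> A"
    show "smod (q k) + v k \<le> (SUP k\<in>B. smod (q k) + v k)"
    proof (cases "k \<in> B")
      case False
      with assms(2) \<open>k \<in> A\<close> have "smod (q k) + v k = -\<infinity>" by (cases "v k") auto
      then show ?thesis by (simp only:) simp
    qed (auto intro: SUP_upper)
  qed
  show "(SUP k\<in>B. smod (q k) + v k) \<le> (SUP k\<in>A. smod (q k) + v k)"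
    using assms(1) by (rule SUP_subset_mono) simp
qed

lemma trop_lin_minf: "trop_lin A q (\<lambda>k. -\<infinity>) = -\<infinity>"
proof -
  have "smod r + -\<infinity> = -\<infinity>" for r by (cases r) auto
  then show ?thesis unfolding trop_lin_def by (simp add: bot_ereal_def[symmetric])
qed

lemma trop_lin_reindex: "trop_lin (f ` A) q v = trop_lin A (q \<circ> f) (v \<circ> f)"
  unfolding trop_lin_def by (simp add: image_comp)

lemma trop_lin_unit_coeffs: "(\<And>k. k \<in> A \<Longrightarrow> smod (q k) = 0) \<Longrightarrow> trop_lin A q v = (SUP k\<in>A. v k)"
  unfolding trop_lin_def by simp

lemma trop_lin_zero_coeffs: "(\<And>k. k \<in> A \<Longrightarrow> v k \<noteq> \<infinity>) \<Longrightarrow> trop_lin A (\<lambda>_. SZero) v = -\<infinity>"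
  using trop_lin_drop_zeros[of "{}" A "\<lambda>_. SZero" v] by simp

lemma metzler_sat_cong:
  assumes "\<And>k. k \<le> N \<Longrightarrow> v k = w k"
  shows "metzler_sat m N Q v = metzler_sat m N Q w"
proof -
  have "diag_pos N Q v = diag_pos N Q w" "diag_neg N Q v = diag_neg N Q w"
    "off_diag N Q v = off_diag N Q w"
    unfolding diag_pos_def diag_neg_def off_diag_def using assms
    by (auto simp: fun_eq_iff intro!: trop_lin_cong)
  then show ?thesis unfolding metzler_sat_def by simp
qed

lemma metzler_sat_max:
  assumes "metzler_sat m N Q v" "metzler_sat m N Q w"
  shows "metzler_sat m N Q (\<lambda>k. max (v k) (w k))"
proof -
  have max_eqs: "diag_pos N Q (\<lambda>k. max (v k) (w k)) i = max (diag_pos N Q v i) (diag_pos N Q w i)"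
    "diag_neg N Q (\<lambda>k. max (v k) (w k)) i = max (diag_neg N Q v i) (diag_neg N Q w i)"
    "off_diag N Q (\<lambda>k. max (v k) (w k)) i j = max (off_diag N Q v i j) (off_diag N Q w i j)" for i j
    by (simp_all add: diag_pos_def diag_neg_def off_diag_def trop_lin_max)
  show ?thesis
    unfolding metzler_sat_def max_eqs
  proof (intro conjI allI impI)
    fix i assume "i < m"
    then show "max (diag_neg N Q v i) (diag_neg N Q w i) \<le> max (diag_pos N Q v i) (diag_pos N Q w i)"
      using assms unfolding metzler_sat_def by (meson max.mono)
  next
    fix i j assume "i < m" "j < m" "i \<noteq> j"
    then have "2 * off_diag N Q v i j \<le> diag_pos N Q v i + diag_pos N Q v j"
      "2 * off_diag N Q w i j \<le> diag_pos N Q w i + diag_pos N Q w j"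
      using assms unfolding metzler_sat_def by auto
    moreover have "diag_pos N Q u i + diag_pos N Q u j
        \<le> max (diag_pos N Q v i) (diag_pos N Q w i) + max (diag_pos N Q v j) (diag_pos N Q w j)"
      if "u = v \<or> u = w" for u
      using that by (intro add_mono) auto
    ultimately show "2 * max (off_diag N Q v i j) (off_diag N Q w i j)
        \<le> max (diag_pos N Q v i) (diag_pos N Q w i) + max (diag_pos N Q v j) (diag_pos N Q w j)"
      by (smt (verit) max_def order_trans)
  qed
qed

lemma metzler_sat_translate:
  assumes "metzler_sat m N Q v"
  shows "metzler_sat m N Q (\<lambda>k. ereal t + v k)"
proof -
  have double: "2 * (ereal t + c) \<le> (ereal t + p) + (ereal t + q)" if "2 * c \<le> p + q" for c p q
    using that by (cases c; cases p; cases q) (auto simp: algebra_simps)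
  show ?thesis
    using assms add_left_mono double
    unfolding metzler_sat_def diag_pos_def diag_neg_def off_diag_def trop_lin_translate
    by blast
qed

lemma metzler_sat_minf: "metzler_sat m N Q (\<lambda>k. -\<infinity>)"
  unfolding metzler_sat_def diag_pos_def diag_neg_def off_diag_def trop_lin_minf by simp

definition coords_list :: "nat \<Rightarrow> (nat \<Rightarrow> ereal) \<Rightarrow> ereal list" where
  "coords_list N v = map (\<lambda>i. v (Suc i)) [0..<N]"

lemma length_coords_list [simp]: "length (coords_list N v) = N"
  by (simp add: coords_list_def)

lemma xcoord_coords_list: "1 \<le> k \<Longrightarrow> k \<le> N \<Longrightarrow> xcoord (coords_list N v) k = v k"
  unfolding xcoord_def coords_list_def by (cases k) auto

lemma xcoord_0 [simp]: "xcoord x 0 = 0"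
  by (simp add: xcoord_def)

lemma coords_list_xcoord: "length x = N \<Longrightarrow> coords_list N (xcoord x) = x"
  unfolding coords_list_def xcoord_def by (rule nth_equalityI) auto

lemma xcoord_neq_infty: "x \<in> Tn N \<Longrightarrow> k \<le> N \<Longrightarrow> xcoord x k \<noteq> \<infinity>"
  unfolding Tn_def xcoord_def by (cases k) auto

lemma coords_list_cong: "(\<And>k. 1 \<le> k \<Longrightarrow> k \<le> N \<Longrightarrow> v k = w k) \<Longrightarrow> coords_list N v = coords_list N w"
  unfolding coords_list_def by (auto simp: Suc_le_eq)

lemma take_coords_list: "n \<le> N \<Longrightarrow> take n (coords_list N v) = coords_list n v"
  unfolding coords_list_def by (simp add: take_map)

lemma map2_coords_list: "map2 f (coords_list N v) (coords_list N w) = coords_list N (\<lambda>k. f (v k) (w k))"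
  unfolding coords_list_def by (rule nth_equalityI) auto

lemma set_coords_list: "set (coords_list N v) = v ` {1..N}"
proof -
  have "set (coords_list N v) = (\<lambda>i. v (Suc i)) ` {0..<N}"
    by (simp add: coords_list_def)
  also have "\<dots> = v ` Suc ` {0..<N}"
    by (simp only: image_image)
  also have "\<dots> = v ` {1..N}"
    by (simp only: image_Suc_atLeastLessThan atLeastLessThanSuc_atLeastAtMost One_nat_def)
  finally show ?thesis .
qed

lemma coords_list_in_Tn: "coords_list N v \<in> Tn N \<longleftrightarrow> (\<forall>k\<in>{1..N}. v k \<noteq> \<infinity>)"
  by (simp add: Tn_def set_coords_list)

lemma coords_list_in_metzler_spec:
  assumes "v 0 = 0"
  shows "coords_list N v \<in> metzler_spec m N Q \<longleftrightarrow>
    (\<forall>k\<in>{1..N}. v k \<noteq> \<infinity>) \<and> metzler_sat m N Q v"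
proof -
  have "xcoord (coords_list N v) k = v k" if "k \<le> N" for k
    using assms that by (cases k) (simp_all add: xcoord_coords_list)
  then have "metzler_sat m N Q (xcoord (coords_list N v)) = metzler_sat m N Q v"
    by (rule metzler_sat_cong)
  then show ?thesis by (simp add: metzler_spec_eq coords_list_in_Tn)
qed

lemma metzler_spec_trop_convex: "trop_convex (metzler_spec m N Q)"
  unfolding trop_convex_def
proof (intro ballI allI impI)
  fix x y and l l' :: ereal
  assume x: "x \<in> metzler_spec m N Q" and y: "y \<in> metzler_spec m N Q"
    and coeffs: "l \<noteq> \<infinity> \<and> l' \<noteq> \<infinity> \<and> max l l' = 0"
  have xT: "x \<in> Tn N" and yT: "y \<in> Tn N"
    and sat: "metzler_sat m N Q (xcoord x)" "metzler_sat m N Q (xcoord y)"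
    using x y unfolding metzler_spec_eq by auto
  define h where "h = (\<lambda>k. max (l + xcoord x k) (l' + xcoord y k))"
  have "coords_list N (xcoord x) = x" "coords_list N (xcoord y) = y"
    using xT yT by (simp_all add: Tn_def coords_list_xcoord)
  then have "map2 (\<lambda>a b. max (l + a) (l' + b)) x y = coords_list N h"
    using map2_coords_list[of "\<lambda>a b. max (l + a) (l' + b)" N "xcoord x" "xcoord y"]
    by (simp add: h_def)
  moreover have "h 0 = 0"
    using coeffs by (simp add: h_def)
  moreover have "h k \<noteq> \<infinity>" if "k \<le> N" for k
    using coeffs xcoord_neq_infty[OF xT that] xcoord_neq_infty[OF yT that]
    by (simp add: h_def max_def)
  moreover have "metzler_sat m N Q h"
  proof (cases "l = -\<infinity> \<or> l' = -\<infinity>")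
    case True
    \<comment> \<open>The other coefficient is then 0 and the combination is one of the two points.\<close>
    have minf_plus: "-\<infinity> + a = -\<infinity>" if "a \<noteq> \<infinity>" for a :: ereal
      using that by (cases a) simp_all
    consider "l = -\<infinity>" "l' = 0" | "l' = -\<infinity>" "l = 0"
      using True coeffs by (cases "l = -\<infinity>") auto
    then show ?thesis
    proof cases
      case 1
      then have "metzler_sat m N Q h = metzler_sat m N Q (xcoord y)"
        using xcoord_neq_infty[OF xT] by (intro metzler_sat_cong) (simp add: h_def minf_plus)
      then show ?thesis using sat by simp
    next
      case 2
      then have "metzler_sat m N Q h = metzler_sat m N Q (xcoord x)"
        using xcoord_neq_infty[OF yT] by (intro metzler_sat_cong) (simp add: h_def minf_plus)
      then show ?thesis using sat by simp
    qed
  next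
    case False
    then obtain t t' where "l = ereal t" "l' = ereal t'"
      using coeffs by (cases l; cases l') auto
    then show ?thesis
      unfolding h_def by (simp only:) (intro metzler_sat_max metzler_sat_translate sat)
  qed
  ultimately show "map2 (\<lambda>a b. max (l + a) (l' + b)) x y \<in> metzler_spec m N Q"
    by (simp add: coords_list_in_metzler_spec)
qed

lemma trop_convex_take_image:
  assumes "trop_convex W"
  shows "trop_convex (take n ` W)"
  unfolding trop_convex_def
proof (intro ballI allI impI)
  fix x y and l l' :: ereal
  assume "x \<in> take n ` W" "y \<in> take n ` W" and coeffs: "l \<noteq> \<infinity> \<and> l' \<noteq> \<infinity> \<and> max l l' = 0"
  then obtain x' y' where "x' \<in> W" "y' \<in> W" and xy: "x = take n x'" "y = take n y'" by auto
  then have "map2 (\<lambda>a b. max (l + a) (l' + b)) x' y' \<in> W"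
    using assms coeffs unfolding trop_convex_def by blast
  moreover have "map2 (\<lambda>a b. max (l + a) (l' + b)) x y = take n (map2 (\<lambda>a b. max (l + a) (l' + b)) x' y')"
    unfolding xy by (simp add: take_map take_zip)
  ultimately show "map2 (\<lambda>a b. max (l + a) (l' + b)) x y \<in> take n ` W"
    by simp
qed

subsection \<open>Building blocks of Metzler families\<close>

definition shift_vars :: "nat \<Rightarrow> nat \<Rightarrow> qfam \<Rightarrow> qfam" where
  "shift_vars r a Q k i j = (if r \<le> k \<and> k \<le> r + a then Q (k - r) i j else SZero)"

lemma trop_lin_shift_vars:
  assumes "A \<subseteq> {..a}"
  shows "trop_lin ((+) r ` A) (\<lambda>k. shift_vars r a Q k i j) v = trop_lin A (\<lambda>k. Q k i j) (\<lambda>k. v (r + k))"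
  unfolding trop_lin_reindex using assms by (intro trop_lin_cong) (auto simp: shift_vars_def)

lemma metzler_sat_shift_vars:
  assumes "r + a \<le> N" and "\<forall>k\<le>N. v k \<noteq> \<infinity>"
  shows "metzler_sat m N (shift_vars r a Q) v \<longleftrightarrow> metzler_sat m a Q (\<lambda>k. v (r + k))"
proof -
  have diag: "{k. k \<le> N \<and> P (shift_vars r a Q k i i)} = (+) r ` {k. k \<le> a \<and> P (Q k i i)}"
    if "\<not> P SZero" for P i
  proof (intro set_eqI iffI)
    fix k assume "k \<in> {k. k \<le> N \<and> P (shift_vars r a Q k i i)}"
    then have "k = r + (k - r)" "k - r \<le> a" "P (Q (k - r) i i)"
      using that by (auto simp: shift_vars_def split: if_splits)
    then show "k \<in> (+) r ` {k. k \<le> a \<and> P (Q k i i)}" by blast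
  qed (use assms(1) in \<open>auto simp: shift_vars_def\<close>)
  have "diag_pos N (shift_vars r a Q) v i = diag_pos a Q (\<lambda>k. v (r + k)) i"
    "diag_neg N (shift_vars r a Q) v i = diag_neg a Q (\<lambda>k. v (r + k)) i" for i
    unfolding diag_pos_def diag_neg_def diag[of is_pos, simplified] diag[of is_neg, simplified]
    by (rule trop_lin_shift_vars; auto)+
  moreover have "off_diag N (shift_vars r a Q) v i j = off_diag a Q (\<lambda>k. v (r + k)) i j" for i j
  proof -
    have "(+) r ` {..a} = {r..r + a}"
    proof (intro set_eqI iffI)
      fix k assume "k \<in> {r..r + a}"
      then show "k \<in> (+) r ` {..a}" by (intro image_eqI[of _ _ "k - r"]) auto
    qed auto
    then have "off_diag N (shift_vars r a Q) v i j = trop_lin ((+) r ` {..a}) (\<lambda>k. shift_vars r a Q k i j) v"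
      unfolding off_diag_def using assms by (intro trop_lin_drop_zeros) (auto simp: shift_vars_def)
    then show ?thesis by (simp add: off_diag_def trop_lin_shift_vars)
  qed
  ultimately show ?thesis by (simp add: metzler_sat_def)
qed

lemma sym_metzler_family_shift_vars:
  assumes "sym_metzler_family m a Q"
  shows "sym_metzler_family m N (shift_vars r a Q)"
  unfolding sym_metzler_family_def
proof (intro allI impI)
  fix k i j assume "k \<le> N" "i < m" "j < m"
  then show "shift_vars r a Q k i j = shift_vars r a Q k j i \<and>
      (i \<noteq> j \<longrightarrow> is_neg (shift_vars r a Q k i j) \<or> shift_vars r a Q k i j = SZero)"
    using assms[unfolded sym_metzler_family_def, rule_format, of "k - r" i j]
      assms[unfolded sym_metzler_family_def, rule_format, of "k - r" j i]
    by (auto simp: shift_vars_def)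
qed

definition lin_block :: "nat set \<Rightarrow> nat set \<Rightarrow> qfam" where
  "lin_block P G k i j = (if k \<in> P then SPos 0 else if k \<in> G then SNeg 0 else SZero)"

lemma metzler_sat_lin_block:
  assumes "P \<inter> G = {}" and "P \<subseteq> {..N}" and "G \<subseteq> {..N}"
  shows "metzler_sat 1 N (lin_block P G) v \<longleftrightarrow> (SUP k\<in>G. v k) \<le> (SUP k\<in>P. v k)"
proof -
  have "{k. k \<le> N \<and> is_pos (lin_block P G k 0 0)} = P"
    "{k. k \<le> N \<and> is_neg (lin_block P G k 0 0)} = G"
    using assms by (auto simp: lin_block_def)
  then have "diag_pos N (lin_block P G) v 0 = (SUP k\<in>P. v k)"
    "diag_neg N (lin_block P G) v 0 = (SUP k\<in>G. v k)"
    unfolding diag_pos_def diag_neg_def using assms(1)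
    by (auto intro!: trop_lin_unit_coeffs simp: lin_block_def)
  then show ?thesis by (simp add: metzler_sat_def)
qed

lemma sym_metzler_family_lin_block: "sym_metzler_family 1 N (lin_block P G)"
  unfolding sym_metzler_family_def by simp

definition quad_block :: "nat \<Rightarrow> nat \<Rightarrow> nat \<Rightarrow> qfam" where
  "quad_block x y s k i j =
     (if i = 0 \<and> j = 0 then (if k = x then SPos 0 else SZero)
      else if i = 1 \<and> j = 1 then (if k = y then SPos 0 else SZero)
      else if k = s then SNeg 0 else SZero)"

lemma metzler_sat_quad_block:
  assumes "x \<le> N" "y \<le> N" "s \<le> N" and "\<forall>k\<le>N. v k \<noteq> \<infinity>"
  shows "metzler_sat 2 N (quad_block x y s) v \<longleftrightarrow> 2 * v s \<le> v x + v y"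
proof -
  have "{k. k \<le> N \<and> is_pos (quad_block x y s k 0 0)} = {x}"
    "{k. k \<le> N \<and> is_pos (quad_block x y s k 1 1)} = {y}"
    using assms by (auto simp: quad_block_def)
  then have pos: "diag_pos N (quad_block x y s) v 0 = v x" "diag_pos N (quad_block x y s) v 1 = v y"
    unfolding diag_pos_def by (simp_all add: quad_block_def zero_ereal_def[symmetric])
  have neg_set: "{k. k \<le> N \<and> is_neg (quad_block x y s k i i)} = {}" if "i < 2" for i
    using that by (auto simp: quad_block_def less_2_cases_iff)
  have neg: "diag_neg N (quad_block x y s) v i = -\<infinity>" if "i < 2" for i
    unfolding diag_neg_def neg_set[OF that] by simp
  have "off_diag N (quad_block x y s) v i j = trop_lin {s} (\<lambda>k. quad_block x y s k i j) v"
    if "i < 2" "j < 2" "i \<noteq> j" for i j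
    unfolding off_diag_def using assms that by (intro trop_lin_drop_zeros) (auto simp: quad_block_def)
  then have "off_diag N (quad_block x y s) v i j = v s" if "i < 2" "j < 2" "i \<noteq> j" for i j
    using that by (auto simp: quad_block_def zero_ereal_def[symmetric])
  with pos neg show ?thesis
    unfolding metzler_sat_def by (auto simp: less_2_cases_iff add.commute)
qed

lemma sym_metzler_family_quad_block: "sym_metzler_family 2 N (quad_block x y s)"
  unfolding sym_metzler_family_def quad_block_def by (auto simp: less_2_cases_iff)

definition block_diag :: "nat \<Rightarrow> qfam \<Rightarrow> qfam \<Rightarrow> qfam" where
  "block_diag m1 Q1 Q2 k i j =
     (if i < m1 \<and> j < m1 then Q1 k i j
      else if m1 \<le> i \<and> m1 \<le> j then Q2 k (i - m1) (j - m1) else SZero)"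

lemma all_less_add_split: "(\<forall>i<(m1::nat) + m2. P i) \<longleftrightarrow> (\<forall>i<m1. P i) \<and> (\<forall>i<m2. P (m1 + i))"
proof (intro iffI allI impI)
  fix i assume P: "(\<forall>i<m1. P i) \<and> (\<forall>i<m2. P (m1 + i))" and "i < m1 + m2"
  then show "P i"
    using P[THEN conjunct2, rule_format, of "i - m1"] by (cases "i < m1") auto
qed auto

lemma metzler_sat_block_diag:
  assumes "\<forall>k\<le>N. v k \<noteq> \<infinity>"
  shows "metzler_sat (m1 + m2) N (block_diag m1 Q1 Q2) v \<longleftrightarrow> metzler_sat m1 N Q1 v \<and> metzler_sat m2 N Q2 v"
proof -
  let ?Q = "block_diag m1 Q1 Q2"
  have zero: "trop_lin {..N} (\<lambda>_. SZero) v = -\<infinity>"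
    using assms by (intro trop_lin_zero_coeffs) auto
  have "diag_pos N ?Q v i = diag_pos N Q1 v i" "diag_neg N ?Q v i = diag_neg N Q1 v i"
    "off_diag N ?Q v i j = off_diag N Q1 v i j"
    "off_diag N ?Q v i (m1 + j') = -\<infinity>" "off_diag N ?Q v (m1 + j') i = -\<infinity>"
    if "i < m1" "j < m1" for i j j'
    using that zero by (simp_all add: diag_pos_def diag_neg_def off_diag_def block_diag_def)
  moreover have "diag_pos N ?Q v (m1 + i) = diag_pos N Q2 v i"
    "diag_neg N ?Q v (m1 + i) = diag_neg N Q2 v i"
    "off_diag N ?Q v (m1 + i) (m1 + j) = off_diag N Q2 v i j" for i j
    by (simp_all add: diag_pos_def diag_neg_def off_diag_def block_diag_def)
  ultimately show ?thesis
    unfolding metzler_sat_def all_less_add_split by auto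
qed

fun block_diag_list :: "(nat \<times> qfam) list \<Rightarrow> nat \<times> qfam" where
  "block_diag_list [] = (0, \<lambda>k i j. SZero)"
| "block_diag_list ((m, Q) # L) = (m + fst (block_diag_list L), block_diag m Q (snd (block_diag_list L)))"

lemma metzler_sat_block_diag_list:
  assumes "\<forall>k\<le>N. v k \<noteq> \<infinity>"
  shows "metzler_sat (fst (block_diag_list L)) N (snd (block_diag_list L)) v \<longleftrightarrow>
    (\<forall>(m, Q)\<in>set L. metzler_sat m N Q v)"
  by (induction L rule: block_diag_list.induct)
    (simp_all add: metzler_sat_def[of 0] metzler_sat_block_diag[OF assms])

lemma sym_metzler_family_block_diag:
  assumes "sym_metzler_family m1 N Q1" and "sym_metzler_family m2 N Q2"
  shows "sym_metzler_family (m1 + m2) N (block_diag m1 Q1 Q2)"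
  unfolding sym_metzler_family_def
proof (intro allI impI)
  fix k i j assume "k \<le> N" "i < m1 + m2" "j < m1 + m2"
  then show "block_diag m1 Q1 Q2 k i j = block_diag m1 Q1 Q2 k j i \<and>
      (i \<noteq> j \<longrightarrow> is_neg (block_diag m1 Q1 Q2 k i j) \<or> block_diag m1 Q1 Q2 k i j = SZero)"
    using assms(1)[unfolded sym_metzler_family_def, rule_format, of k i j]
      assms(1)[unfolded sym_metzler_family_def, rule_format, of k j i]
      assms(2)[unfolded sym_metzler_family_def, rule_format, of k "i - m1" "j - m1"]
      assms(2)[unfolded sym_metzler_family_def, rule_format, of k "j - m1" "i - m1"]
    by (auto simp: block_diag_def)
qed

lemma sym_metzler_family_block_diag_list:
  "\<forall>(m, Q)\<in>set L. sym_metzler_family m N Q \<Longrightarrow>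
    sym_metzler_family (fst (block_diag_list L)) N (snd (block_diag_list L))"
  by (induction L rule: block_diag_list.induct)
    (simp_all add: sym_metzler_family_def[of 0] sym_metzler_family_block_diag)

lemma size_block_diag_list: "fst (block_diag_list L) = (\<Sum>(m, Q)\<leftarrow>L. m)"
  by (induction L rule: block_diag_list.induct) simp_all

subsection \<open>Tropical cones over spectrahedra\<close>

text \<open>Coordinates \<open>r..r+a\<close> of \<open>v\<close> hold \<open>\<lambda> + (0, p)\<close> with \<open>\<lambda> = v r \<le> 0\<close> and \<open>p\<close> in the
  spectrahedron, as long as \<open>\<lambda>\<close> is finite. The two auxiliary coordinates \<open>r+a+1\<close>, \<open>r+a+2\<close>
  force the whole block to be \<open>-\<infinity>\<close> when \<open>\<lambda> = -\<infinity>\<close>; without them the block could hold a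
  recession direction of the spectrahedron instead.\<close>
definition cone_conds :: "nat \<Rightarrow> nat \<Rightarrow> nat \<Rightarrow> qfam \<Rightarrow> (nat \<Rightarrow> ereal) \<Rightarrow> bool" where
  "cone_conds r m a Q v \<longleftrightarrow> v r \<le> 0 \<and> metzler_sat m a Q (\<lambda>k. v (r + k)) \<and>
     (\<forall>k\<in>{1..a}. v (r + k) \<le> v (r + a + 1)) \<and> 2 * v (r + a + 1) \<le> v r + v (r + a + 2)"

lemma cone_conds_minf:
  assumes "\<forall>k\<le>a + 2. v (r + k) = -\<infinity>"
  shows "cone_conds r m a Q v"
proof -
  have "metzler_sat m a Q (\<lambda>k. v (r + k))"
    using assms metzler_sat_cong[of a "\<lambda>k. v (r + k)" "\<lambda>_. -\<infinity>"] metzler_sat_minf by simp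
  moreover have "v r = -\<infinity>" "v (r + a + 1) = -\<infinity>" "\<forall>k\<in>{1..a}. v (r + k) = -\<infinity>"
    using assms[rule_format, of 0] assms[rule_format, of "a + 1"] assms by auto
  ultimately show ?thesis
    unfolding cone_conds_def by simp
qed

lemma cone_conds_point:
  assumes "P \<in> metzler_spec m a Q" and "\<forall>k\<le>a. v (r + k) = xcoord P k"
    and "\<forall>k\<in>{1..a}. xcoord P k \<le> v (r + a + 1)" and "v (r + a + 2) = 2 * v (r + a + 1)"
  shows "cone_conds r m a Q v"
proof -
  have "metzler_sat m a Q (xcoord P)"
    using assms(1) by (simp add: metzler_spec_eq)
  then have "metzler_sat m a Q (\<lambda>k. v (r + k))"
    using assms(2) metzler_sat_cong[of a "\<lambda>k. v (r + k)" "xcoord P"] by simp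
  moreover have "v r = 0"
    using assms(2)[rule_format, of 0] by simp
  ultimately show ?thesis
    using assms(2-4) unfolding cone_conds_def by simp
qed

lemma cone_conds_scalar_minf:
  assumes "cone_conds r m a Q v" and "v r = -\<infinity>" and "v (r + a + 2) \<noteq> \<infinity>" and "k \<in> {1..a}"
  shows "v (r + k) = -\<infinity>"
proof -
  have "2 * v (r + a + 1) \<le> v r + v (r + a + 2)"
    using assms(1) unfolding cone_conds_def by blast
  also have "\<dots> = -\<infinity>"
    using assms(2,3) by (cases "v (r + a + 2)") simp_all
  finally have "v (r + a + 1) = -\<infinity>"
    by (cases "v (r + a + 1)") auto
  then show ?thesis
    using assms(1,4) unfolding cone_conds_def by auto
qed

lemma cone_conds_scalar_finite:
  assumes "cone_conds r m a Q v" and "v r = ereal l" and "\<forall>k. v k \<noteq> \<infinity>"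
  shows "coords_list a (\<lambda>k. ereal (-l) + v (r + k)) \<in> metzler_spec m a Q"
proof -
  have "metzler_sat m a Q (\<lambda>k. ereal (-l) + v (r + k))"
    using assms(1) unfolding cone_conds_def by (simp add: metzler_sat_translate)
  moreover have "ereal (-l) + v (r + k) \<noteq> \<infinity>" for k
    using assms(3) by simp
  ultimately show ?thesis
    using assms(2) by (simp add: coords_list_in_metzler_spec)
qed

definition cone_blocks :: "nat \<Rightarrow> nat \<Rightarrow> nat \<Rightarrow> qfam \<Rightarrow> (nat \<times> qfam) list" where
  "cone_blocks r m a Q =
     [(m, shift_vars r a Q), (1, lin_block {0} {r}), (2, quad_block r (r + a + 2) (r + a + 1))] @
     map (\<lambda>k. (1, lin_block {r + a + 1} {r + k})) [1..<Suc a]"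

lemma cone_blocks_sat:
  assumes "v 0 = 0" and "\<forall>k\<le>N. v k \<noteq> \<infinity>" and "0 < r" and "r + a + 2 \<le> N"
  shows "(\<forall>(m', Q')\<in>set (cone_blocks r m a Q). metzler_sat m' N Q' v) \<longleftrightarrow> cone_conds r m a Q v"
proof -
  have "metzler_sat 1 N (lin_block {0} {r}) v \<longleftrightarrow> v r \<le> 0"
    using assms by (subst metzler_sat_lin_block) auto
  moreover have "metzler_sat 1 N (lin_block {r + a + 1} {r + k}) v \<longleftrightarrow> v (r + k) \<le> v (r + a + 1)"
    if "k \<in> {1..a}" for k
    using assms that by (subst metzler_sat_lin_block) auto
  ultimately show ?thesis
    using assms unfolding cone_blocks_def cone_conds_def
    by (auto simp: metzler_sat_shift_vars metzler_sat_quad_block)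
qed

subsection \<open>The tropical convex hull of two projections\<close>

text \<open>Coordinates \<open>1..n\<close> hold the tropical convex combination \<open>max (\<lambda> + p) (\<mu> + q)\<close> of
  points \<open>p\<close>, \<open>q\<close> of the two spectrahedra.\<close>
definition union_conds ::
  "nat \<Rightarrow> nat \<Rightarrow> nat \<Rightarrow> nat \<Rightarrow> qfam \<Rightarrow> nat \<Rightarrow> nat \<Rightarrow> nat \<Rightarrow> qfam \<Rightarrow> (nat \<Rightarrow> ereal) \<Rightarrow> bool" where
  "union_conds n r1 m1 a1 Q1 r2 m2 a2 Q2 v \<longleftrightarrow>
     cone_conds r1 m1 a1 Q1 v \<and> cone_conds r2 m2 a2 Q2 v \<and> 0 \<le> max (v r1) (v r2) \<and>
     (\<forall>i\<in>{1..n}. v i = max (v (r1 + i)) (v (r2 + i)))"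

lemma union_conds_swap:
  "union_conds n r1 m1 a1 Q1 r2 m2 a2 Q2 v = union_conds n r2 m2 a2 Q2 r1 m1 a1 Q1 v"
  unfolding union_conds_def by (auto simp: max.commute)

lemma union_conds_one_cone_empty:
  assumes "union_conds n r1 m1 a1 Q1 r2 m2 a2 Q2 v" and "v r1 = -\<infinity>" and "\<forall>k. v k \<noteq> \<infinity>"
    and "n \<le> a1" and "n \<le> a2" and "take n ` metzler_spec m2 a2 Q2 \<subseteq> X"
  shows "coords_list n v \<in> X"
proof -
  have cones: "cone_conds r1 m1 a1 Q1 v" "cone_conds r2 m2 a2 Q2 v"
    using assms(1) unfolding union_conds_def by simp_all
  have "v r2 = 0"
    using assms(1,2) cones(2) unfolding union_conds_def cone_conds_def by (simp add: antisym)
  then have "coords_list a2 (\<lambda>k. v (r2 + k)) \<in> metzler_spec m2 a2 Q2"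
    using cone_conds_scalar_finite[OF cones(2), of 0] assms(3) by (simp add: zero_ereal_def)
  then have "coords_list n (\<lambda>k. v (r2 + k)) \<in> X"
    using assms(5,6) by (force simp: take_coords_list)
  moreover have "v (r1 + i) = -\<infinity>" if "i \<in> {1..n}" for i
    using cone_conds_scalar_minf[OF cones(1) assms(2)] assms(3,4) that by auto
  then have "coords_list n (\<lambda>k. v (r2 + k)) = coords_list n v"
    using assms(1) unfolding union_conds_def by (intro coords_list_cong) auto
  ultimately show ?thesis by simp
qed

lemma union_conds_in_trop_convex:
  assumes "union_conds n r1 m1 a1 Q1 r2 m2 a2 Q2 v" and "\<forall>k. v k \<noteq> \<infinity>"
    and "n \<le> a1" and "n \<le> a2" and "trop_convex X"
    and "take n ` metzler_spec m1 a1 Q1 \<subseteq> X" and "take n ` metzler_spec m2 a2 Q2 \<subseteq> X"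
  shows "coords_list n v \<in> X"
proof (cases "v r1 = -\<infinity> \<or> v r2 = -\<infinity>")
  case True
  then show ?thesis
    using union_conds_one_cone_empty[of n r1 m1 a1 Q1 r2 m2 a2 Q2 v X]
      union_conds_one_cone_empty[of n r2 m2 a2 Q2 r1 m1 a1 Q1 v X] assms
    by (auto simp: union_conds_swap)
next
  case False
  have cones: "cone_conds r1 m1 a1 Q1 v" "cone_conds r2 m2 a2 Q2 v"
    using assms(1) unfolding union_conds_def by simp_all
  obtain l1 l2 where l: "v r1 = ereal l1" "v r2 = ereal l2"
    using False assms(2) by (cases "v r1"; cases "v r2") auto
  define p1 where "p1 = (\<lambda>k. ereal (-l1) + v (r1 + k))"
  define p2 where "p2 = (\<lambda>k. ereal (-l2) + v (r2 + k))"
  have "coords_list n p1 \<in> X" "coords_list n p2 \<in> X"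
    using cone_conds_scalar_finite[OF cones(1) l(1)] cone_conds_scalar_finite[OF cones(2) l(2)]
      assms(2-4,6,7) unfolding p1_def p2_def by (force simp: take_coords_list)+
  moreover have "max (ereal l1) (ereal l2) = 0"
    using assms(1) cones l unfolding union_conds_def cone_conds_def by (simp add: antisym)
  moreover have "ereal l1 \<noteq> \<infinity>" "ereal l2 \<noteq> \<infinity>"
    by simp_all
  ultimately have "map2 (\<lambda>a b. max (ereal l1 + a) (ereal l2 + b)) (coords_list n p1) (coords_list n p2) \<in> X"
    using assms(5) unfolding trop_convex_def by blast
  moreover have "ereal l + (ereal (-l) + x) = x" if "x \<noteq> \<infinity>" for l x
    using that by (cases x) simp_all
  then have "map2 (\<lambda>a b. max (ereal l1 + a) (ereal l2 + b)) (coords_list n p1) (coords_list n p2) =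
      coords_list n v"
    using assms(1,2) unfolding map2_coords_list union_conds_def p1_def p2_def
    by (intro coords_list_cong) simp
  ultimately show ?thesis by simp
qed

lemma union_conds_witness:
  assumes P: "P \<in> metzler_spec m1 a1 Q1" and "n \<le> a1" and "n \<le> a2" and "n < r1" and "n < r2"
    and "r2 + a2 + 2 < r1 \<or> r1 + a1 + 2 < r2"
  shows "take n P \<in> coords_list n ` {v. v 0 = 0 \<and> (\<forall>k. v k \<noteq> \<infinity>) \<and> union_conds n r1 m1 a1 Q1 r2 m2 a2 Q2 v}"
proof (rule image_eqI)
  have PT: "P \<in> Tn a1"
    using P by (simp add: metzler_spec_eq)
  define s where "s = Max (insert 0 (xcoord P ` {1..a1}))"
  have "s \<in> insert 0 (xcoord P ` {1..a1})"
    unfolding s_def by (intro Max_in) simp_all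
  then have "s \<noteq> \<infinity>"
    using xcoord_neq_infty[OF PT] by (auto simp: eq_commute[of "\<infinity>"])
  have s_ge: "xcoord P k \<le> s" if "k \<in> {1..a1}" for k
    unfolding s_def using that by (intro Max_ge) simp_all
  define v where "v k = (if k \<le> n then xcoord P k else if r1 \<le> k \<and> k \<le> r1 + a1 then xcoord P (k - r1)
    else if k = r1 + a1 + 1 then s else if k = r1 + a1 + 2 then 2 * s else -\<infinity>)" for k
  have "v 0 = 0"
    by (simp add: v_def)
  moreover have "\<forall>k. v k \<noteq> \<infinity>"
    using xcoord_neq_infty[OF PT] assms(2) \<open>s \<noteq> \<infinity>\<close> by (auto simp: v_def)
  moreover have "cone_conds r1 m1 a1 Q1 v"
    using assms(4) s_ge by (intro cone_conds_point[OF P]) (auto simp: v_def)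
  moreover have second_cone: "v (r2 + k) = -\<infinity>" if "k \<le> a2 + 2" for k
  proof -
    have "\<not> r2 + k \<le> n" "\<not> (r1 \<le> r2 + k \<and> r2 + k \<le> r1 + a1)"
      "r2 + k \<noteq> r1 + a1 + 1" "r2 + k \<noteq> r1 + a1 + 2"
      using assms(5,6) that by linarith+
    then show ?thesis by (simp only: v_def if_False)
  qed
  then have "cone_conds r2 m2 a2 Q2 v"
    by (intro cone_conds_minf) simp
  moreover have "v i = max (v (r1 + i)) (v (r2 + i))" if "i \<in> {1..n}" for i
  proof -
    have "v i = xcoord P i" "v (r1 + i) = xcoord P i"
      using assms(2,4) that by (auto simp: v_def)
    then show ?thesis
      using second_cone[of i] assms(3) that by simp
  qed
  moreover have "v r1 = 0"
    using assms(4) by (simp add: v_def)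
  ultimately show "v \<in> {v. v 0 = 0 \<and> (\<forall>k. v k \<noteq> \<infinity>) \<and> union_conds n r1 m1 a1 Q1 r2 m2 a2 Q2 v}"
    unfolding union_conds_def by simp
  have "coords_list n v = coords_list n (xcoord P)"
    by (rule coords_list_cong) (simp add: v_def)
  also have "\<dots> = take n P"
    using PT assms(2) by (simp add: Tn_def take_coords_list[symmetric] coords_list_xcoord)
  finally show "take n P = coords_list n v" ..
qed

subsection \<open>Realisation by a Metzler family\<close>

definition link_blocks :: "nat \<Rightarrow> nat \<Rightarrow> nat \<Rightarrow> (nat \<times> qfam) list" where
  "link_blocks n r1 r2 = (1, lin_block {r1, r2} {0}) #
     concat (map (\<lambda>i. [(1, lin_block {i} {r1 + i}), (1, lin_block {i} {r2 + i}),
       (1, lin_block {r1 + i, r2 + i} {i})]) [1..<Suc n])"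

lemma link_blocks_sat:
  assumes "v 0 = 0" and "0 < r1" and "0 < r2" and "r1 + n \<le> N" and "r2 + n \<le> N"
  shows "(\<forall>(m, Q)\<in>set (link_blocks n r1 r2). metzler_sat m N Q v) \<longleftrightarrow>
    0 \<le> max (v r1) (v r2) \<and> (\<forall>i\<in>{1..n}. v i = max (v (r1 + i)) (v (r2 + i)))"
proof -
  have "metzler_sat 1 N (lin_block {r1, r2} {0}) v \<longleftrightarrow> 0 \<le> max (v r1) (v r2)"
    using assms by (subst metzler_sat_lin_block) (auto simp: sup_max)
  moreover have "metzler_sat 1 N (lin_block {i} {r1 + i}) v \<and> metzler_sat 1 N (lin_block {i} {r2 + i}) v \<and>
      metzler_sat 1 N (lin_block {r1 + i, r2 + i} {i}) v \<longleftrightarrow> v i = max (v (r1 + i)) (v (r2 + i))"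
    if "i \<in> {1..n}" for i
    using assms that by (auto simp: metzler_sat_lin_block[unfolded One_nat_def] sup_max intro: antisym)
  ultimately show ?thesis
    unfolding link_blocks_def by (simp add: atLeastLessThanSuc_atLeastAtMost del: upt_Suc)
qed

definition union_blocks ::
  "nat \<Rightarrow> nat \<Rightarrow> nat \<Rightarrow> nat \<Rightarrow> qfam \<Rightarrow> nat \<Rightarrow> nat \<Rightarrow> nat \<Rightarrow> qfam \<Rightarrow> (nat \<times> qfam) list" where
  "union_blocks n r1 m1 a1 Q1 r2 m2 a2 Q2 =
     cone_blocks r1 m1 a1 Q1 @ cone_blocks r2 m2 a2 Q2 @ link_blocks n r1 r2"

text \<open>Variables \<open>1..n\<close> carry the point, \<open>n+1..n+a1+3\<close> the first cone block and
  \<open>n+a1+4..n+a1+a2+6\<close> the second one.\<close>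
definition union_family :: "nat \<Rightarrow> nat \<Rightarrow> nat \<Rightarrow> qfam \<Rightarrow> nat \<Rightarrow> nat \<Rightarrow> qfam \<Rightarrow> nat \<times> qfam" where
  "union_family n m1 a1 Q1 m2 a2 Q2 =
     block_diag_list (union_blocks n (n + 1) m1 a1 Q1 (n + a1 + 4) m2 a2 Q2)"

lemma metzler_spec_union_family:
  fixes n a1 a2 m1 m2 :: nat and Q1 Q2 :: qfam
  assumes "n \<le> a1" and "n \<le> a2"
  defines "U \<equiv> union_family n m1 a1 Q1 m2 a2 Q2" and "N \<equiv> n + (a1 + a2 + 6)"
  shows "metzler_spec (fst U) N (snd U) =
    coords_list N ` {v. v 0 = 0 \<and> (\<forall>k. v k \<noteq> \<infinity>) \<and> union_conds n (n + 1) m1 a1 Q1 (n + a1 + 4) m2 a2 Q2 v}"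
    (is "_ = coords_list N ` ?V")
proof -
  have sat: "coords_list N v \<in> metzler_spec (fst U) N (snd U) \<longleftrightarrow> union_conds n (n + 1) m1 a1 Q1 (n + a1 + 4) m2 a2 Q2 v"
    if "v 0 = 0" and "\<forall>k\<le>N. v k \<noteq> \<infinity>" for v
  proof -
    have "(\<forall>(m, Q)\<in>set (union_blocks n (n + 1) m1 a1 Q1 (n + a1 + 4) m2 a2 Q2). metzler_sat m N Q v) \<longleftrightarrow>
        union_conds n (n + 1) m1 a1 Q1 (n + a1 + 4) m2 a2 Q2 v"
      using that assms(1,2) unfolding union_blocks_def union_conds_def N_def
      by (simp only: set_append ball_Un cone_blocks_sat link_blocks_sat)
    then show ?thesis
      using that unfolding U_def union_family_def
      by (simp add: coords_list_in_metzler_spec metzler_sat_block_diag_list)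
  qed
  show ?thesis
  proof (intro set_eqI iffI)
    fix x assume x: "x \<in> metzler_spec (fst U) N (snd U)"
    then have xT: "x \<in> Tn N"
      by (simp add: metzler_spec_eq)
    define v where "v k = (if k \<le> N then xcoord x k else -\<infinity>)" for k
    have v: "v 0 = 0" "\<forall>k. v k \<noteq> \<infinity>"
      using xcoord_neq_infty[OF xT] by (simp_all add: v_def)
    have "coords_list N v = x"
      using xT coords_list_xcoord[of x N] by (auto simp: Tn_def v_def intro: trans[OF coords_list_cong])
    with x v sat[of v] show "x \<in> coords_list N ` ?V"
      by auto
  qed (use sat in auto)
qed

lemma tconv_union_family:
  fixes n a1 a2 m1 m2 :: nat and Q1 Q2 :: qfam
  assumes "n \<le> a1" and "n \<le> a2"
  defines "U \<equiv> union_family n m1 a1 Q1 m2 a2 Q2"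
  shows "tconv n (take n ` metzler_spec m1 a1 Q1 \<union> take n ` metzler_spec m2 a2 Q2) =
    take n ` metzler_spec (fst U) (n + (a1 + a2 + 6)) (snd U)"
proof -
  let ?V = "{v. v 0 = 0 \<and> (\<forall>k. v k \<noteq> \<infinity>) \<and> union_conds n (n + 1) m1 a1 Q1 (n + a1 + 4) m2 a2 Q2 v}"
  have W: "take n ` metzler_spec (fst U) (n + (a1 + a2 + 6)) (snd U) = coords_list n ` ?V"
    unfolding U_def metzler_spec_union_family[OF assms(1,2)] image_image
    by (simp add: take_coords_list)
  have "coords_list n ` ?V \<subseteq> Tn n"
    by (auto simp: coords_list_in_Tn)
  moreover have "take n ` metzler_spec m1 a1 Q1 \<subseteq> coords_list n ` ?V"
  proof
    fix y assume "y \<in> take n ` metzler_spec m1 a1 Q1"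
    then obtain P where "P \<in> metzler_spec m1 a1 Q1" "y = take n P" by auto
    then show "y \<in> coords_list n ` ?V"
      using assms(1,2) union_conds_witness[of P m1 a1 Q1 n a2 "n + 1" "n + a1 + 4"] by simp
  qed
  moreover have "take n ` metzler_spec m2 a2 Q2 \<subseteq> coords_list n ` ?V"
  proof
    fix y assume "y \<in> take n ` metzler_spec m2 a2 Q2"
    then obtain P where "P \<in> metzler_spec m2 a2 Q2" "y = take n P" by auto
    then show "y \<in> coords_list n ` ?V"
      using assms(1,2) union_conds_witness[of P m2 a2 Q2 n a1 "n + a1 + 4" "n + 1"]
      by (simp add: union_conds_swap)
  qed
  moreover have "trop_convex (coords_list n ` ?V)"
    unfolding W[symmetric] by (intro trop_convex_take_image metzler_spec_trop_convex)
  ultimately have "tconv n (take n ` metzler_spec m1 a1 Q1 \<union> take n ` metzler_spec m2 a2 Q2) \<subseteq> coords_list n ` ?V"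
    unfolding tconv_def by (intro Inter_lower) auto
  moreover have "coords_list n ` ?V \<subseteq> tconv n (take n ` metzler_spec m1 a1 Q1 \<union> take n ` metzler_spec m2 a2 Q2)"
    unfolding tconv_def using assms(1,2) by (auto intro!: union_conds_in_trop_convex)
  ultimately show ?thesis
    unfolding W by (rule antisym)
qed

lemma sym_metzler_family_union_family:
  assumes "sym_metzler_family m1 a1 Q1" and "sym_metzler_family m2 a2 Q2"
  shows "sym_metzler_family (fst (union_family n m1 a1 Q1 m2 a2 Q2)) N (snd (union_family n m1 a1 Q1 m2 a2 Q2))"
  unfolding union_family_def
  by (rule sym_metzler_family_block_diag_list)
    (auto simp: union_blocks_def cone_blocks_def link_blocks_def assms sym_metzler_family_shift_vars
      sym_metzler_family_lin_block sym_metzler_family_quad_block simp del: One_nat_def)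

lemma size_union_family_ge_1: "1 \<le> fst (union_family n m1 a1 Q1 m2 a2 Q2)"
  by (simp add: union_family_def size_block_diag_list union_blocks_def link_blocks_def)

theorem mainTheorem17:
  fixes n :: nat and S1 S2 :: "ereal list set"
  assumes "proj_metzler_spec n S1" and "proj_metzler_spec n S2"
  shows "proj_metzler_spec n (tconv n (S1 \<union> S2))"
proof -
  obtain d1 m1 Q1 where rep1: "sym_metzler_family m1 (n + d1) Q1" "S1 = take n ` metzler_spec m1 (n + d1) Q1"
    using assms(1) unfolding proj_metzler_spec_def by blast
  obtain d2 m2 Q2 where rep2: "sym_metzler_family m2 (n + d2) Q2" "S2 = take n ` metzler_spec m2 (n + d2) Q2"
    using assms(2) unfolding proj_metzler_spec_def by blast
  define U where "U = union_family n m1 (n + d1) Q1 m2 (n + d2) Q2"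
  have "tconv n (S1 \<union> S2) = take n ` metzler_spec (fst U) (n + (n + d1 + (n + d2) + 6)) (snd U)"
    unfolding rep1 rep2 U_def by (intro tconv_union_family) simp_all
  moreover have "sym_metzler_family (fst U) (n + (n + d1 + (n + d2) + 6)) (snd U)"
    unfolding U_def using rep1(1) rep2(1) by (rule sym_metzler_family_union_family)
  moreover have "1 \<le> fst U"
    unfolding U_def by (rule size_union_family_ge_1)
  ultimately show ?thesis
    unfolding proj_metzler_spec_def by blast
qed

end
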